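(* Let $\mathcal{D}$ be a distribution on $\mathbb{S}^{n-1}$, $f(x)=\bigwedge_{i=1}^k\mathrm{sign}(w_i\cdot x)$ with unit vectors $w_i$, $\varepsilon,\rho\in(0,1/2)$, and suppose $\Pr_{\mathbf{x}\sim\mathcal{D}_-}[w_1\cdot\mathbf{x}<-\rho]>0$. Let $\mathcal{K}\subseteq\mathbb{R}^{n+1}$ be a bounded convex body and for $x\in\mathbb{R}^n$ let $\mathcal{K}_x=\mathcal{K}\cap\{w:w\cdot(x,1)<0\}$. Let $\mathcal{D}_-^{(1)}$ denote $\mathcal{D}_-$ conditioned on $w_1\cdot\mathbf{x}<-\rho$. Then \[\Pr_{\mathbf{x}\sim\mathcal{D}_-}[w_1\cdot\mathbf{x}<-\rho]\cdot\mathbb{E}_{\mathbf{x}\sim\mathcal{D}_-^{(1)}}\left[\left|\mathcal{K}_{\mathbf{x}}^{\mathrm{bad}}\right|\right]\le\frac{100n}{\varepsilon^2}\cdot M_+^{-1}\log(M_+)\cdot\left|\mathcal{K}^{\mathrm{bad}}\right|.\]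
   Context: $f(x)=1$ iff $w_i\cdot x>0$ for all $i$, else $-1$; $\mathcal{D}_-$ is $\mathcal{D}$ conditioned on $f(\mathbf{x})=-1$; $|\cdot|$ is Lebesgue volume. Set $M_-=\sqrt{n\log(9/\rho)/\log(2k\varepsilon^{-1})}$ and $M_+=\left(200k\cdot\frac{n^2M_-}{\varepsilon^4}\right)^2\cdot2^{\sqrt{n\log(9/\rho)\log(2k\varepsilon^{-1})}}$. For any convex body $\mathcal{K}\subseteq\mathbb{R}^{n+1}$, $\mathcal{K}^{\mathrm{good}}=\{w\in\mathcal{K}:\Pr_{\mathbf{x}\sim\mathcal{D}_-}[w\cdot(\mathbf{x},1)<0]\ge\frac{100n}{\varepsilon^2}\cdot\frac{\log(M_+)}{M_+}\}$ and $\mathcal{K}^{\mathrm{bad}}=\mathcal{K}\setminus\mathcal{K}^{\mathrm{good}}$ (applied to $\mathcal{K}_x$ as well). *)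

theory Defs
  imports "HOL-Probability.Probability"
begin

definition halfspace_and :: "nat \<Rightarrow> (nat \<Rightarrow> real^'n) \<Rightarrow> real^'n \<Rightarrow> real" where
  "halfspace_and k w x = (if \<forall>i\<in>{1..k}. w i \<bullet> x > 0 then 1 else -1)"

definition Dminus :: "(real^'n) measure \<Rightarrow> nat \<Rightarrow> (nat \<Rightarrow> real^'n) \<Rightarrow> (real^'n) measure" where
  "Dminus D k w = uniform_measure D {x \<in> space D. halfspace_and k w x = -1}"

definition Mminus :: "nat \<Rightarrow> nat \<Rightarrow> real \<Rightarrow> real \<Rightarrow> real" where
  "Mminus n k eps rho = sqrt (real n * ln (9 / rho) / ln (2 * real k / eps))"

definition Mplus :: "nat \<Rightarrow> nat \<Rightarrow> real \<Rightarrow> real \<Rightarrow> real" where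
  "Mplus n k eps rho =
     (200 * real k * (real n ^ 2 * Mminus n k eps rho / eps ^ 4)) ^ 2 *
     2 powr sqrt (real n * ln (9 / rho) * ln (2 * real k / eps))"

definition good_thr :: "nat \<Rightarrow> nat \<Rightarrow> real \<Rightarrow> real \<Rightarrow> real" where
  "good_thr n k eps rho = 100 * real n / eps ^ 2 * (ln (Mplus n k eps rho) / Mplus n k eps rho)"

text \<open>R^{n+1} is represented as (real^'n) \<times> real, so that w . (x,1) = inner w (x,1).\<close>
definition Kgood :: "(real^'n) measure \<Rightarrow> real \<Rightarrow> ((real^'n) \<times> real) set \<Rightarrow> ((real^'n) \<times> real) set" where
  "Kgood Dm t K = {v \<in> K. measure Dm {x \<in> space Dm. v \<bullet> (x, 1) < 0} \<ge> t}"

definition Kbad :: "(real^'n) measure \<Rightarrow> real \<Rightarrow> ((real^'n) \<times> real) set \<Rightarrow> ((real^'n) \<times> real) set" where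
  "Kbad Dm t K = K - Kgood Dm t K"

definition Kslice :: "((real^'n) \<times> real) set \<Rightarrow> real^'n \<Rightarrow> ((real^'n) \<times> real) set" where
  "Kslice K x = K \<inter> {v. v \<bullet> (x, 1) < 0}"

end

theory Submission
  imports Defs
begin

text \<open>
  Write \<open>H\<^sub>v = {x. v \<bullet> (x, 1) < 0}\<close>, so that \<open>v \<in> \<K>\<^sub>x\<close> iff \<open>x \<in> H\<^sub>v\<close>; by definition every
  \<open>v \<in> \<K>\<^sup>b\<^sup>a\<^sup>d\<close> has \<open>\<D>\<^sub>-(H\<^sub>v) < t\<close>, where \<open>t\<close> is the threshold. The left-hand side is
  \<open>\<integral>\<^bsub>{w\<^sub>1 \<bullet> x < -\<rho>}\<^esub> |\<K>\<^sup>b\<^sup>a\<^sup>d \<inter> {v. x \<in> H\<^sub>v}| d\<D>\<^sub>-(x)\<close>, and exchanging the order of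
  integration (Tonelli) bounds it by \<open>\<integral>\<^bsub>\<K>\<^sup>b\<^sup>a\<^sup>d\<^esub> \<D>\<^sub>-(H\<^sub>v) dv \<le> t |\<K>\<^sup>b\<^sup>a\<^sup>d|\<close>.
\<close>

lemma sets_pair_measure_borel:
  assumes "sets M = sets (borel :: 'a::second_countable_topology measure)"
    and "sets N = sets (borel :: 'b::second_countable_topology measure)"
  shows "sets (M \<Otimes>\<^sub>M N) = sets (borel :: ('a \<times> 'b) measure)"
proof -
  have "sets (M \<Otimes>\<^sub>M N) = sets (borel \<Otimes>\<^sub>M borel :: ('a \<times> 'b) measure)"
    using assms by (intro sets_pair_measure_cong)
  also have "\<dots> = sets borel"
    by (subst borel_prod) (rule refl)
  finally show ?thesis .
qed

lemma (in pair_sigma_finite) nn_integral_emeasure_section_le: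
  assumes R: "R \<in> sets (M1 \<Otimes>\<^sub>M M2)" and B: "B \<in> sets M2"
    and small: "\<And>y. y \<in> B \<Longrightarrow> emeasure M1 {x \<in> space M1. (x, y) \<in> R} \<le> c"
  shows "(\<integral>\<^sup>+x. emeasure M2 {y \<in> B. (x, y) \<in> R} \<partial>M1) \<le> c * emeasure M2 B"
proof -
  define F where "F = (\<lambda>x y. indicator R (x, y) * indicator B y :: ennreal)"
  have F_meas: "case_prod F \<in> borel_measurable (M1 \<Otimes>\<^sub>M M2)"
    unfolding F_def using R B by measurable
  have "(\<integral>\<^sup>+x. emeasure M2 {y \<in> B. (x, y) \<in> R} \<partial>M1) = (\<integral>\<^sup>+x. (\<integral>\<^sup>+y. F x y \<partial>M2) \<partial>M1)"
  proof (rule nn_integral_cong)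
    fix x assume "x \<in> space M1"
    then have "Pair x -` R \<inter> B \<in> sets M2"
      using R B by (auto intro: measurable_Pair2)
    moreover have "{y \<in> B. (x, y) \<in> R} = Pair x -` R \<inter> B"
      by auto
    ultimately show "emeasure M2 {y \<in> B. (x, y) \<in> R} = (\<integral>\<^sup>+y. F x y \<partial>M2)"
      by (simp add: F_def indicator_inter_arith[symmetric] indicator_vimage[symmetric]
          nn_integral_indicator)
  qed
  also have "\<dots> = (\<integral>\<^sup>+y. (\<integral>\<^sup>+x. F x y \<partial>M1) \<partial>M2)"
    using Fubini'[OF F_meas] by simp
  also have "\<dots> \<le> (\<integral>\<^sup>+y. c * indicator B y \<partial>M2)"
  proof (rule nn_integral_mono)
    fix y assume "y \<in> space M2"
    let ?R\<^sub>y = "{x \<in> space M1. (x, y) \<in> R}"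
    have "?R\<^sub>y \<in> sets M1"
      using R \<open>y \<in> space M2\<close> by (auto intro: measurable_Pair1)
    have "(\<integral>\<^sup>+x. F x y \<partial>M1) = (\<integral>\<^sup>+x. indicator ?R\<^sub>y x * indicator B y \<partial>M1)"
      by (rule nn_integral_cong) (auto simp: F_def split: split_indicator)
    also have "\<dots> = emeasure M1 ?R\<^sub>y * indicator B y"
      using \<open>?R\<^sub>y \<in> sets M1\<close> by (simp add: nn_integral_multc)
    finally have "(\<integral>\<^sup>+x. F x y \<partial>M1) = emeasure M1 ?R\<^sub>y * indicator B y" .
    then show "(\<integral>\<^sup>+x. F x y \<partial>M1) \<le> c * indicator B y"
      using small by (auto split: split_indicator)
  qed
  also have "\<dots> = c * emeasure M2 B"
    using B by (simp add: nn_integral_cmult_indicator)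
  finally show ?thesis .
qed

lemma (in finite_measure) measure_times_integral_uniform_measure_le:
  assumes A: "A \<in> sets M" and f_nonneg: "\<And>x. 0 \<le> f x" and "0 \<le> c"
    and bound: "(\<integral>\<^sup>+x. ennreal (f x) * indicator A x \<partial>M) \<le> ennreal c"
  shows "measure M A * integral\<^sup>L (uniform_measure M A) f \<le> c"
proof (cases "integrable (uniform_measure M A) f \<and> measure M A \<noteq> 0")
  case False
  then show ?thesis using \<open>0 \<le> c\<close> by (auto simp: not_integrable_integral_eq)
next
  case True
  then have f_int: "integrable (uniform_measure M A) f" and "measure M A \<noteq> 0" by auto
  have "f \<in> borel_measurable M"
    using borel_measurable_integrable[OF f_int]
    by (subst measurable_cong_sets[where M'="uniform_measure M A" and N'=borel]) auto
  have "ennreal (measure M A * integral\<^sup>L (uniform_measure M A) f)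
      = ennreal (measure M A) * (\<integral>\<^sup>+x. ennreal (f x) \<partial>uniform_measure M A)"
    using f_int f_nonneg by (simp add: nn_integral_eq_integral ennreal_mult integral_nonneg)
  also have "\<dots> = ennreal (measure M A) *
      ((\<integral>\<^sup>+x. ennreal (f x) * indicator A x \<partial>M) / ennreal (measure M A))"
    using \<open>f \<in> borel_measurable M\<close> A by (simp add: nn_integral_uniform_measure emeasure_eq_measure)
  also have "\<dots> = (\<integral>\<^sup>+x. ennreal (f x) * indicator A x \<partial>M)"
    using \<open>measure M A \<noteq> 0\<close> unfolding ennreal_times_divide
    by (subst mult.commute) (simp add: ennreal_mult_divide_eq)
  finally have "ennreal (measure M A * integral\<^sup>L (uniform_measure M A) f) \<le> ennreal c"
    using bound by simp
  then show ?thesis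
    using \<open>0 \<le> c\<close> by simp
qed

lemma Kbad_eq: "Kbad Dm t K = {v \<in> K. measure Dm {x \<in> space Dm. v \<bullet> (x, 1) < 0} < t}"
  unfolding Kbad_def Kgood_def by auto

lemma Kbad_Kslice: "Kbad Dm t (Kslice K x) = Kslice (Kbad Dm t K) x"
  unfolding Kbad_eq Kslice_def by auto

lemma Kbad_nonpos_threshold: "t \<le> 0 \<Longrightarrow> Kbad Dm t K = {}"
  unfolding Kbad_eq by (auto simp: not_less intro: order_trans[OF _ measure_nonneg])

lemma open_halfspace_incidence: "open {p :: 'a::real_inner \<times> ('a \<times> real). snd p \<bullet> (fst p, 1) < 0}"
  by (intro open_Collect_less continuous_intros)

lemma Kslice_sets_borel:
  assumes "K \<in> sets borel"
  shows "Kslice K x \<in> sets borel"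
proof -
  have "open {v. v \<bullet> (x, 1::real) < 0}"
    by (intro open_Collect_less continuous_intros)
  with assms show ?thesis
    unfolding Kslice_def by auto
qed

lemma Kbad_sets_borel:
  fixes Dm :: "(real^'n) measure"
  assumes "finite_measure Dm" and Dm_sets: "sets Dm = sets borel" and "K \<in> sets borel"
  shows "Kbad Dm t K \<in> sets borel"
proof -
  interpret Dm: finite_measure Dm by fact
  interpret pair_sigma_finite Dm "lborel :: ((real^'n) \<times> real) measure" ..
  define H where "H = {p :: (real^'n) \<times> ((real^'n) \<times> real). snd p \<bullet> (fst p, 1) < 0}"
  have "H \<in> sets (Dm \<Otimes>\<^sub>M lborel)"
    unfolding sets_pair_measure_borel[OF Dm_sets sets_lborel] H_def
    using open_halfspace_incidence by (rule borel_open)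
  then have "(\<lambda>v. emeasure Dm ((\<lambda>x. (x, v)) -` H)) \<in> borel_measurable lborel"
    by (rule measurable_emeasure_Pair2)
  then have "(\<lambda>v. enn2real (emeasure Dm ((\<lambda>x. (x, v)) -` H))) \<in> borel_measurable borel"
    by simp
  moreover have "(\<lambda>v. enn2real (emeasure Dm ((\<lambda>x. (x, v)) -` H)))
      = (\<lambda>v. measure Dm {x \<in> space Dm. v \<bullet> (x, 1::real) < 0})"
    using sets_eq_imp_space_eq[OF Dm_sets] by (simp add: H_def measure_def)
  ultimately have "(\<lambda>v. measure Dm {x \<in> space Dm. v \<bullet> (x, 1::real) < 0}) \<in> borel_measurable borel"
    by simp
  then have "{v \<in> space borel. measure Dm {x \<in> space Dm. v \<bullet> (x, 1::real) < 0} < t} \<in> sets borel"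
    by measurable
  with \<open>K \<in> sets borel\<close> show ?thesis
    unfolding Kbad_eq by (simp add: Collect_conj_eq Int_commute)
qed

lemma nn_integral_measure_Kslice_Kbad_le:
  fixes Dm :: "(real^'n) measure"
  assumes "finite_measure Dm" and Dm_sets: "sets Dm = sets borel" and A: "A \<in> sets Dm"
    and "compact K"
  shows "(\<integral>\<^sup>+x. ennreal (measure lebesgue (Kslice (Kbad Dm t K) x)) * indicator A x \<partial>Dm)
    \<le> ennreal (t * measure lebesgue (Kbad Dm t K))"
proof -
  interpret Dm: finite_measure Dm by fact
  interpret pair_sigma_finite Dm "lborel :: ((real^'n) \<times> real) measure" ..
  define B where "B = Kbad Dm t K"
  define R where "R = {(x, v :: (real^'n) \<times> real). x \<in> A \<and> v \<bullet> (x, 1) < 0}"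
  have Dm_space: "space Dm = UNIV"
    using sets_eq_imp_space_eq[OF Dm_sets] by simp
  have B: "B \<in> sets borel"
    unfolding B_def using \<open>compact K\<close>
    by (intro Kbad_sets_borel[OF \<open>finite_measure Dm\<close> Dm_sets]) (simp add: borel_compact)
  have B_finite: "emeasure lborel S \<noteq> \<infinity>" if "S \<in> sets borel" "S \<subseteq> B" for S
  proof -
    have "S \<subseteq> K"
      using \<open>S \<subseteq> B\<close> by (auto simp: B_def Kbad_def)
    then have "emeasure lborel S \<le> emeasure lborel K"
      using \<open>compact K\<close> by (intro emeasure_mono) (auto intro: borel_compact)
    then show ?thesis
      using emeasure_compact_finite[OF \<open>compact K\<close>] by (auto simp: top_unique)
  qed
  have R: "R \<in> sets (Dm \<Otimes>\<^sub>M lborel)"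
  proof -
    have "R = (A \<times> UNIV) \<inter> {p. snd p \<bullet> (fst p, 1) < 0}"
      by (auto simp: R_def)
    moreover have "{p :: (real^'n) \<times> ((real^'n) \<times> real). snd p \<bullet> (fst p, 1) < 0} \<in> sets (Dm \<Otimes>\<^sub>M lborel)"
      unfolding sets_pair_measure_borel[OF Dm_sets sets_lborel]
      using open_halfspace_incidence by (rule borel_open)
    ultimately show ?thesis
      using A by auto
  qed
  have small: "emeasure Dm {x \<in> space Dm. (x, v) \<in> R} \<le> ennreal t" if "v \<in> B" for v
  proof -
    have "open {x. v \<bullet> (x, 1) < 0}"
      by (intro open_Collect_less continuous_intros)
    then have H: "{x \<in> space Dm. v \<bullet> (x, 1) < 0} \<in> sets Dm"
      by (simp add: Dm_sets Dm_space)
    have "emeasure Dm {x \<in> space Dm. (x, v) \<in> R} \<le> emeasure Dm {x \<in> space Dm. v \<bullet> (x, 1) < 0}"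
      using H by (intro emeasure_mono) (auto simp: R_def)
    also have "\<dots> \<le> ennreal t"
      using \<open>v \<in> B\<close> by (simp add: Dm.emeasure_eq_measure B_def Kbad_eq ennreal_leI)
    finally show ?thesis .
  qed
  have slice: "ennreal (measure lebesgue (Kslice B x)) * indicator A x
      = emeasure lborel {v \<in> B. (x, v) \<in> R}" for x
  proof (cases "x \<in> A")
    case True
    then have "{v \<in> B. (x, v) \<in> R} = Kslice B x"
      by (auto simp: R_def Kslice_def)
    moreover have "Kslice B x \<in> sets borel" "Kslice B x \<subseteq> B"
      using B by (auto simp: Kslice_sets_borel Kslice_def)
    ultimately show ?thesis
      using True B_finite by (simp add: emeasure_eq_ennreal_measure)
  qed (simp add: R_def)
  have "(\<integral>\<^sup>+x. ennreal (measure lebesgue (Kslice B x)) * indicator A x \<partial>Dm)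
      = (\<integral>\<^sup>+x. emeasure lborel {v \<in> B. (x, v) \<in> R} \<partial>Dm)"
    by (simp add: slice)
  also have "\<dots> \<le> ennreal t * emeasure lborel B"
    using R B small by (intro nn_integral_emeasure_section_le) auto
  also have "\<dots> = ennreal (t * measure lebesgue B)"
    using B B_finite[OF B] by (simp add: emeasure_eq_ennreal_measure ennreal_mult'')
  finally show ?thesis
    unfolding B_def .
qed

lemma prob_space_Dminus:
  assumes "prob_space D" and pos: "measure D {x \<in> space D. halfspace_and k w x = -1} > 0"
  shows "prob_space (Dminus D k w)"
proof -
  interpret D: prob_space D by fact
  show ?thesis
    unfolding Dminus_def using pos by (intro prob_space_uniform_measure) (auto simp: D.emeasure_eq_measure)
qed

theorem lemma3p4:
  fixes D :: "(real^'n) measure" and k :: nat and w :: "nat \<Rightarrow> real^'n"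
    and eps rho :: real and K :: "((real^'n) \<times> real) set"
  assumes D_prob: "prob_space D" and D_sets: "sets D = sets borel"
    and D_sphere: "measure D (sphere 0 1) = 1"
    and k_pos: "k \<ge> 1"
    and w_unit: "\<And>i. i \<in> {1..k} \<Longrightarrow> norm (w i) = 1"
    and eps: "0 < eps" "eps < 1/2" and rho: "0 < rho" "rho < 1/2"
    and neg_pos: "measure D {x \<in> space D. halfspace_and k w x = -1} > 0"
    and w1_pos: "measure (Dminus D k w) {x \<in> space (Dminus D k w). w 1 \<bullet> x < - rho} > 0"
    and K_convex: "convex K" and K_compact: "compact K" and K_int: "interior K \<noteq> {}"
  shows "measure (Dminus D k w) {x \<in> space (Dminus D k w). w 1 \<bullet> x < - rho} *
           integral\<^sup>L (uniform_measure (Dminus D k w) {x \<in> space (Dminus D k w). w 1 \<bullet> x < - rho})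
             (\<lambda>x. measure lebesgue
                   (Kbad (Dminus D k w) (good_thr CARD('n) k eps rho) (Kslice K x)))
         \<le> good_thr CARD('n) k eps rho *
           measure lebesgue (Kbad (Dminus D k w) (good_thr CARD('n) k eps rho) K)"
proof -
  define Dm where "Dm = Dminus D k w"
  define t where "t = good_thr CARD('n) k eps rho"
  define A where "A = {x \<in> space Dm. w 1 \<bullet> x < - rho}"
  interpret Dm: prob_space Dm
    unfolding Dm_def using D_prob neg_pos by (rule prob_space_Dminus)
  have Dm_sets: "sets Dm = sets borel"
    using D_sets by (simp add: Dm_def Dminus_def)
  have A: "A \<in> sets Dm"
    using w1_pos measure_notin_sets unfolding A_def Dm_def by fastforce
  have "0 \<le> t * measure lebesgue (Kbad Dm t K)"
    by (cases "t \<le> 0") (simp_all add: Kbad_nonpos_threshold)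
  moreover have "(\<integral>\<^sup>+x. ennreal (measure lebesgue (Kslice (Kbad Dm t K) x)) * indicator A x \<partial>Dm)
      \<le> ennreal (t * measure lebesgue (Kbad Dm t K))"
    using Dm.finite_measure_axioms Dm_sets A K_compact by (rule nn_integral_measure_Kslice_Kbad_le)
  ultimately have "measure Dm A * integral\<^sup>L (uniform_measure Dm A)
      (\<lambda>x. measure lebesgue (Kslice (Kbad Dm t K) x)) \<le> t * measure lebesgue (Kbad Dm t K)"
    using A by (intro Dm.measure_times_integral_uniform_measure_le) auto
  then show ?thesis
    by (simp add: Kbad_Kslice Dm_def t_def A_def)
qed

end
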